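(* Consider a SOCO problem with decision space $F=[x_L,x_H]$ and a sequence of discrete systems, indexed by $i$, whose state spacings $\delta_i$ tend to $0$ and each of which has $[x_1,x_m]=F$. Let $OPT_D^i$ be the optimal cost in the $i$-th discrete system and $OPT_C$ the optimal cost in the continuous system, both under the norm $N$. Then $\lim_{i\to\infty}|OPT_D^i-OPT_C|=0$.
   Context: $F=[x_L,x_H]\subseteq\mathbb{R}^+$; $\|\cdot\|$ a norm on $\mathbb{R}$; $\theta\ge1$, $N(\cdot)=\theta\|\cdot\|$; cost functions $c^1,\dots,c^T:F\to\mathbb{R}^+$ convex (finite on $F$) with uniformly bounded subgradients; horizon $T$ fixed. A discrete system is a set of states $M=\{x_1<\dots<x_m\}\subseteq F$ with equal spacing $\delta=x_{k+1}-x_k$, $x_1=x_L$, $x_m=x_H$. The optimal cost over a state set $S$ ($S=M$ or $S=F$) under norm $N$ is $\min_{(x^1,\dots,x^T)\in S^T}\sum_{t=1}^Tc^t(x^t)+N(x^t-x^{t-1})$ with $x^0=0$. *)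

theory Defs
  imports "HOL-Analysis.Analysis"
begin

definition is_norm_on_real :: "(real \<Rightarrow> real) \<Rightarrow> bool" where
  "is_norm_on_real nrm \<longleftrightarrow>
     (\<forall>x. 0 \<le> nrm x) \<and> (\<forall>x. nrm x = 0 \<longleftrightarrow> x = 0) \<and>
     (\<forall>a x. nrm (a * x) = \<bar>a\<bar> * nrm x) \<and>
     (\<forall>x y. nrm (x + y) \<le> nrm x + nrm y)"

definition is_subgradient :: "(real \<Rightarrow> real) \<Rightarrow> real set \<Rightarrow> real \<Rightarrow> real \<Rightarrow> bool" where
  "is_subgradient f F x g \<longleftrightarrow> (\<forall>y\<in>F. f x + g * (y - x) \<le> f y)"

text \<open>Total cost of a trajectory X (X 0 is the initial state, X 1 .. X T the decisions).\<close>
definition soco_cost :: "(nat \<Rightarrow> real \<Rightarrow> real) \<Rightarrow> (real \<Rightarrow> real) \<Rightarrow> nat \<Rightarrow> (nat \<Rightarrow> real) \<Rightarrow> real" where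
  "soco_cost c N T X = (\<Sum>t = 1..T. c t (X t) + N (X t - X (t - 1)))"

definition soco_opt :: "(nat \<Rightarrow> real \<Rightarrow> real) \<Rightarrow> (real \<Rightarrow> real) \<Rightarrow> nat \<Rightarrow> real set \<Rightarrow> real" where
  "soco_opt c N T S = Inf {soco_cost c N T X | X. X 0 = 0 \<and> (\<forall>t\<in>{1..T}. X t \<in> S)}"

definition is_discrete_system :: "real \<Rightarrow> real \<Rightarrow> real \<Rightarrow> real set \<Rightarrow> bool" where
  "is_discrete_system xL xH \<delta> M \<longleftrightarrow>
     0 < \<delta> \<and> (\<exists>m::nat. 1 \<le> m \<and> M = {xL + real k * \<delta> | k. k < m} \<and>
                         xL + real (m - 1) * \<delta> = xH)"

end

theory Submission
  imports Defs
begin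

text \<open>Rounding every decision of a continuous trajectory down to the grid moves each state by
  less than \<open>\<delta>\<close>. Since the hitting costs have subgradients bounded by \<open>G\<close> and the switching
  cost is \<open>K\<close>-Lipschitz, each of the \<open>T\<close> rounds costs at most \<open>(G + 2K) \<delta>\<close> more. Hence
  \<open>OPT\<^sub>C \<le> OPT\<^sub>D \<le> OPT\<^sub>C + T (G + 2K) \<delta>\<close>, the first inequality because the grid lies in \<open>F\<close>.\<close>

definition soco_costs :: "(nat \<Rightarrow> real \<Rightarrow> real) \<Rightarrow> (real \<Rightarrow> real) \<Rightarrow> nat \<Rightarrow> real set \<Rightarrow> real set"
  where "soco_costs c N T S = {soco_cost c N T X | X. X 0 = 0 \<and> (\<forall>t\<in>{1..T}. X t \<in> S)}"

lemma soco_opt_eq_Inf_costs: "soco_opt c N T S = Inf (soco_costs c N T S)"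
  unfolding soco_opt_def soco_costs_def ..

lemma norm_on_real_eq:
  assumes "is_norm_on_real nrm"
  shows "nrm z = \<bar>z\<bar> * nrm 1"
  using assms unfolding is_norm_on_real_def by (metis mult.right_neutral)

lemma norm_on_real_lipschitz:
  assumes "is_norm_on_real nrm"
  shows "nrm a \<le> nrm b + nrm 1 * \<bar>a - b\<bar>"
proof -
  have "nrm a \<le> nrm b + nrm (a - b)"
    using assms unfolding is_norm_on_real_def by (metis add.commute diff_add_cancel)
  then show ?thesis using norm_on_real_eq[OF assms, of "a - b"] by (simp add: mult.commute)
qed

lemma subgradient_le:
  assumes "is_subgradient f F y g" "x \<in> F" "\<bar>g\<bar> \<le> G"
  shows "f y \<le> f x + G * \<bar>x - y\<bar>"
proof -
  have "f y + g * (x - y) \<le> f x" using assms(1,2) unfolding is_subgradient_def by blast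
  moreover have "- (g * (x - y)) \<le> \<bar>g\<bar> * \<bar>x - y\<bar>"
    by (simp add: abs_mult[symmetric])
  moreover have "\<bar>g\<bar> * \<bar>x - y\<bar> \<le> G * \<bar>x - y\<bar>"
    using assms(3) by (simp add: mult_right_mono)
  ultimately show ?thesis by linarith
qed

lemma discrete_system_subset:
  assumes "is_discrete_system xL xH d M"
  shows "M \<subseteq> {xL..xH}"
proof
  fix y assume "y \<in> M"
  from assms obtain m :: nat where d: "0 < d" and m: "M = {xL + real k * d | k. k < m}"
    "xL + real (m - 1) * d = xH" unfolding is_discrete_system_def by blast
  then obtain k where k: "k < m" "y = xL + real k * d" using \<open>y \<in> M\<close> by blast
  have "real k * d \<le> real (m - 1) * d" using k d by (intro mult_right_mono) auto
  then show "y \<in> {xL..xH}" using k d m(2) by auto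
qed

lemma discrete_system_round_down:
  assumes "is_discrete_system xL xH d M" "x \<in> {xL..xH}"
  obtains y where "y \<in> M" "y \<le> x" "x - d < y"
proof -
  from assms(1) obtain m :: nat where d: "0 < d" and m: "1 \<le> m"
    "M = {xL + real k * d | k. k < m}" "xL + real (m - 1) * d = xH"
    unfolding is_discrete_system_def by blast
  define k where "k = nat \<lfloor>(x - xL) / d\<rfloor>"
  have "0 \<le> (x - xL) / d" using assms(2) d by auto
  then have k: "real k \<le> (x - xL) / d" "(x - xL) / d < real k + 1"
    unfolding k_def by linarith+
  have "(x - xL) / d \<le> real (m - 1)"
    using assms(2) d m(3) by (simp add: divide_le_eq mult.commute)
  then have "k < m" using k m(1) by linarith
  then have "xL + real k * d \<in> M" using m(2) by blast
  moreover have "real k * d \<le> x - xL" "x - xL < (real k + 1) * d"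
    using k d by (simp_all add: le_divide_eq divide_less_eq)
  ultimately show ?thesis by (intro that) (auto simp: algebra_simps)
qed

lemma discrete_system_round_trajectory:
  fixes T :: nat
  assumes "is_discrete_system xL xH d M" "X 0 = 0" "\<forall>t\<in>{1..T}. X t \<in> {xL..xH}"
  obtains Y where "Y 0 = 0" "\<forall>t\<in>{1..T}. Y t \<in> M" "\<forall>t\<le>T. \<bar>Y t - X t\<bar> \<le> d"
proof -
  have "\<forall>t\<in>{1..T}. \<exists>y. y \<in> M \<and> y \<le> X t \<and> X t - d < y"
    using discrete_system_round_down[OF assms(1)] assms(3) by metis
  then obtain r where r: "\<forall>t\<in>{1..T}. r t \<in> M \<and> r t \<le> X t \<and> X t - d < r t" by metis
  define Y where "Y t = (if t = 0 then 0 else r t)" for t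
  have "0 < d" using assms(1) unfolding is_discrete_system_def by blast
  have "\<bar>Y t - X t\<bar> \<le> d" if "t \<le> T" for t
  proof (cases "t = 0")
    case False
    then have "t \<in> {1..T}" using that by auto
    then have "r t \<le> X t" "X t - d < r t" using r by auto
    then show ?thesis using False unfolding Y_def by simp
  qed (use assms(2) \<open>0 < d\<close> Y_def in simp)
  moreover have "\<forall>t\<in>{1..T}. Y t \<in> M" using r unfolding Y_def by simp
  ultimately show ?thesis by (intro that[of Y]) (auto simp: Y_def)
qed

lemma soco_cost_perturb:
  assumes N_lip: "\<And>a b. N a \<le> N b + K * \<bar>a - b\<bar>" and "0 \<le> K"
    and subgrad: "\<forall>t\<in>{1..T}. \<exists>g. \<bar>g\<bar> \<le> G \<and> is_subgradient (c t) F (Y t) g"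
    and X_in: "\<forall>t\<in>{1..T}. X t \<in> F"
    and close: "\<forall>t\<le>T. \<bar>Y t - X t\<bar> \<le> d"
  shows "soco_cost c N T Y \<le> soco_cost c N T X + real T * (G + 2 * K) * d"
proof -
  have step: "c t (Y t) + N (Y t - Y (t - 1))
      \<le> c t (X t) + N (X t - X (t - 1)) + (G + 2 * K) * d" if t: "t \<in> {1..T}" for t
  proof -
    obtain g where g: "\<bar>g\<bar> \<le> G" "is_subgradient (c t) F (Y t) g" using subgrad t by blast
    have close_t: "\<bar>Y t - X t\<bar> \<le> d" "\<bar>Y (t - 1) - X (t - 1)\<bar> \<le> d" using close t by auto
    have "c t (Y t) \<le> c t (X t) + G * \<bar>X t - Y t\<bar>"
      using subgradient_le[OF g(2) _ g(1)] X_in t by blast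
    also have "G * \<bar>X t - Y t\<bar> \<le> G * d"
      using close_t(1) g(1) by (intro mult_left_mono) (auto simp: abs_minus_commute)
    finally have hit: "c t (Y t) \<le> c t (X t) + G * d" by simp
    have "\<bar>(Y t - Y (t - 1)) - (X t - X (t - 1))\<bar> \<le> 2 * d" using close_t by linarith
    then have "K * \<bar>(Y t - Y (t - 1)) - (X t - X (t - 1))\<bar> \<le> K * (2 * d)"
      using \<open>0 \<le> K\<close> by (rule mult_left_mono)
    with N_lip[of "Y t - Y (t - 1)" "X t - X (t - 1)"] hit show ?thesis
      by (simp add: algebra_simps)
  qed
  have "soco_cost c N T Y \<le> (\<Sum>t = 1..T. c t (X t) + N (X t - X (t - 1)) + (G + 2 * K) * d)"
    unfolding soco_cost_def by (intro sum_mono step)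
  also have "\<dots> = soco_cost c N T X + real T * (G + 2 * K) * d"
    unfolding soco_cost_def by (simp add: sum.distrib)
  finally show ?thesis .
qed

lemma soco_costs_nonempty:
  assumes "S \<noteq> {}"
  shows "soco_costs c N T S \<noteq> {}"
proof -
  obtain s where "s \<in> S" using assms by blast
  then show ?thesis
    unfolding soco_costs_def by (auto intro!: exI[of _ "\<lambda>t. if t = 0 then 0 else s"])
qed

lemma soco_costs_bdd_below:
  assumes "\<And>t x. t \<in> {1..T} \<Longrightarrow> x \<in> S \<Longrightarrow> 0 \<le> c t x" "\<And>z. 0 \<le> N z"
  shows "bdd_below (soco_costs c N T S)"
proof -
  have "0 \<le> soco_cost c N T X" if "\<forall>t\<in>{1..T}. X t \<in> S" for X
    unfolding soco_cost_def using assms that by (intro sum_nonneg add_nonneg_nonneg) auto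
  then show ?thesis unfolding soco_costs_def by (auto intro: bdd_belowI[of _ 0])
qed

lemma soco_opt_antimono:
  assumes "A \<subseteq> B" "A \<noteq> {}" "bdd_below (soco_costs c N T B)"
  shows "soco_opt c N T B \<le> soco_opt c N T A"
  unfolding soco_opt_eq_Inf_costs
proof (rule cInf_superset_mono[OF soco_costs_nonempty[OF assms(2)] assms(3)])
  show "soco_costs c N T A \<subseteq> soco_costs c N T B"
    using assms(1) unfolding soco_costs_def by blast
qed

lemma soco_opt_le_approx:
  assumes "B \<noteq> {}" "bdd_below (soco_costs c N T A)"
    and approx: "\<And>X. X 0 = 0 \<Longrightarrow> \<forall>t\<in>{1..T}. X t \<in> B \<Longrightarrow>
       \<exists>Y. Y 0 = 0 \<and> (\<forall>t\<in>{1..T}. Y t \<in> A) \<and> soco_cost c N T Y \<le> soco_cost c N T X + e"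
  shows "soco_opt c N T A \<le> soco_opt c N T B + e"
proof -
  have "Inf (soco_costs c N T A) - e \<le> Inf (soco_costs c N T B)"
  proof (rule cInf_greatest[OF soco_costs_nonempty[OF assms(1)]])
    fix v assume "v \<in> soco_costs c N T B"
    then obtain Y where "Y 0 = 0" "\<forall>t\<in>{1..T}. Y t \<in> A" "soco_cost c N T Y \<le> v + e"
      using approx unfolding soco_costs_def by blast
    then have "soco_cost c N T Y \<in> soco_costs c N T A" "soco_cost c N T Y \<le> v + e"
      unfolding soco_costs_def by blast+
    then have "Inf (soco_costs c N T A) \<le> v + e"
      using cInf_lower[OF _ assms(2)] by fastforce
    then show "Inf (soco_costs c N T A) - e \<le> v" by simp
  qed
  then show ?thesis unfolding soco_opt_eq_Inf_costs by simp
qed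

lemma soco_opt_discrete_error:
  assumes "xL \<le> xH" and disc: "is_discrete_system xL xH d M"
    and c_nonneg: "\<And>t x. t \<in> {1..T} \<Longrightarrow> x \<in> {xL..xH} \<Longrightarrow> 0 \<le> c t x"
    and subgrad: "\<forall>t\<in>{1..T}. \<forall>x\<in>{xL..xH}. \<exists>g. \<bar>g\<bar> \<le> G \<and> is_subgradient (c t) {xL..xH} x g"
    and N_nonneg: "\<And>z. 0 \<le> N z"
    and N_lip: "\<And>a b. N a \<le> N b + K * \<bar>a - b\<bar>" and "0 \<le> K"
  shows "\<bar>soco_opt c N T M - soco_opt c N T {xL..xH}\<bar> \<le> real T * (G + 2 * K) * d"
proof -
  have M_sub: "M \<subseteq> {xL..xH}" using discrete_system_subset[OF disc] .
  obtain y where "y \<in> M" using discrete_system_round_down[OF disc, of xL] assms(1) by auto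
  then have "M \<noteq> {}" by blast
  have bdd_F: "bdd_below (soco_costs c N T {xL..xH})"
    by (rule soco_costs_bdd_below) (use c_nonneg N_nonneg in auto)
  have bdd_M: "bdd_below (soco_costs c N T M)"
    by (rule soco_costs_bdd_below) (use c_nonneg N_nonneg M_sub in auto)
  have lower: "soco_opt c N T {xL..xH} \<le> soco_opt c N T M"
    using soco_opt_antimono[OF M_sub \<open>M \<noteq> {}\<close> bdd_F] .
  have upper: "soco_opt c N T M \<le> soco_opt c N T {xL..xH} + real T * (G + 2 * K) * d"
  proof (rule soco_opt_le_approx[OF _ bdd_M])
    show "{xL..xH} \<noteq> {}" using assms(1) by simp
  next
    fix X assume X: "X 0 = 0" "\<forall>t\<in>{1..T}. X t \<in> {xL..xH}"
    then obtain Y where Y: "Y 0 = 0" "\<forall>t\<in>{1..T}. Y t \<in> M" "\<forall>t\<le>T. \<bar>Y t - X t\<bar> \<le> d"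
      using discrete_system_round_trajectory[OF disc] by metis
    have "\<forall>t\<in>{1..T}. \<exists>g. \<bar>g\<bar> \<le> G \<and> is_subgradient (c t) {xL..xH} (Y t) g"
      using subgrad Y(2) M_sub by blast
    then have "soco_cost c N T Y \<le> soco_cost c N T X + real T * (G + 2 * K) * d"
      using soco_cost_perturb[OF N_lip \<open>0 \<le> K\<close> _ X(2) Y(3)] by blast
    then show "\<exists>Y. Y 0 = 0 \<and> (\<forall>t\<in>{1..T}. Y t \<in> M)
        \<and> soco_cost c N T Y \<le> soco_cost c N T X + real T * (G + 2 * K) * d"
      using Y by blast
  qed
  from lower upper show ?thesis by linarith
qed

theorem lemma12:
  fixes xL xH \<theta> :: real and nrm :: "real \<Rightarrow> real" and c :: "nat \<Rightarrow> real \<Rightarrow> real"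
    and T :: nat and \<delta> :: "nat \<Rightarrow> real" and M :: "nat \<Rightarrow> real set"
  assumes F_pos: "0 \<le> xL" and F_int: "xL \<le> xH"
    and nrm: "is_norm_on_real nrm" and theta: "1 \<le> \<theta>"
    and c_convex: "\<And>t. t \<in> {1..T} \<Longrightarrow> convex_on {xL..xH} (c t)"
    and c_nonneg: "\<And>t x. t \<in> {1..T} \<Longrightarrow> x \<in> {xL..xH} \<Longrightarrow> 0 \<le> c t x"
    and c_subgrad: "\<exists>G. \<forall>t\<in>{1..T}. \<forall>x\<in>{xL..xH}.
                      \<exists>g. \<bar>g\<bar> \<le> G \<and> is_subgradient (c t) {xL..xH} x g"
    and disc: "\<And>i. is_discrete_system xL xH (\<delta> i) (M i)"
    and delta_lim: "\<delta> \<longlonglongrightarrow> 0"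
  shows "(\<lambda>i. \<bar>soco_opt c (\<lambda>z. \<theta> * nrm z) T (M i)
               - soco_opt c (\<lambda>z. \<theta> * nrm z) T {xL..xH}\<bar>) \<longlonglongrightarrow> 0"
proof -
  obtain G where G: "\<forall>t\<in>{1..T}. \<forall>x\<in>{xL..xH}. \<exists>g. \<bar>g\<bar> \<le> G \<and> is_subgradient (c t) {xL..xH} x g"
    using c_subgrad by blast
  define K where "K = \<theta> * nrm 1"
  have "0 \<le> nrm 1" using nrm unfolding is_norm_on_real_def by blast
  then have "0 \<le> K" and N_nonneg: "0 \<le> \<theta> * nrm z" for z
    using theta nrm unfolding K_def is_norm_on_real_def by auto
  have N_lip: "\<theta> * nrm a \<le> \<theta> * nrm b + K * \<bar>a - b\<bar>" for a b
    using mult_left_mono[OF norm_on_real_lipschitz[OF nrm, of a b]] theta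
    unfolding K_def by (simp add: algebra_simps)
  have lim: "(\<lambda>i. real T * (G + 2 * K) * \<delta> i) \<longlonglongrightarrow> 0"
    using tendsto_mult_right_zero[OF delta_lim] by simp
  have bound: "\<bar>soco_opt c (\<lambda>z. \<theta> * nrm z) T (M i) - soco_opt c (\<lambda>z. \<theta> * nrm z) T {xL..xH}\<bar>
      \<le> real T * (G + 2 * K) * \<delta> i" for i
    by (rule soco_opt_discrete_error[OF F_int disc c_nonneg G N_nonneg N_lip \<open>0 \<le> K\<close>])
  show ?thesis
    by (rule tendsto_sandwich[OF _ _ tendsto_const lim]) (use bound in \<open>simp_all add: always_eventually\<close>)
qed

end
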